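(* Let $0 < \nu \leq \tau < \eta \ll 1$ be constants. Suppose $G$ is a graph on $n$ vertices with $\delta(G) \geq \eta n$ which is a robust $(\nu,\tau)$-expander, and let $M$ be a perfect matching in $G$. Then for every $a \in V(G)$, $G$ contains a shifted $M$-walk of length at most $3/\nu$ which both starts and finishes at $a$.
   Context: The notation $\eta \ll 1$ means $\eta$ is chosen sufficiently small (below some absolute positive constant). For a graph $G$ on $n$ vertices and $S \subseteq V(G)$, $RN_{\nu,G}(S)$ is the set of vertices $v$ with $|N(v) \cap S| \geq \nu n$; $G$ is a robust $(\nu,\tau)$-expander if every $S \subseteq V(G)$ with $\tau n \leq |S| \leq (1-\tau)n$ satisfies $|RN_{\nu,G}(S)| \geq |S| + \nu n$. Given a perfect matching $M$ in $G$, a shifted $M$-walk with endpoints $v_1$ and $v_{2\ell}$ is a walk $v_1 v_2 \dots v_{2\ell}$ in $G$ such that $v_{2i}v_{2i+1} \in M$ for every $1 \leq i \leq \ell - 1$ and $v_{2i-1}v_{2i} \notin M$ for every $1 \leq i \leq \ell$; its length is its number of edges. *)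

theory Defs
  imports Main "HOL-Library.Multiset" Complex_Main
begin

definition simple_graph :: "'a set \<Rightarrow> 'a set set \<Rightarrow> bool" where
  "simple_graph V E \<longleftrightarrow> finite V \<and>
     (\<forall>e\<in>E. \<exists>u v. u \<in> V \<and> v \<in> V \<and> u \<noteq> v \<and> e = {u, v})"

definition nbhd :: "'a set \<Rightarrow> 'a set set \<Rightarrow> 'a \<Rightarrow> 'a set" where
  "nbhd V E v = {u \<in> V. {u, v} \<in> E}"

definition min_degree_ge :: "'a set \<Rightarrow> 'a set set \<Rightarrow> real \<Rightarrow> bool" where
  "min_degree_ge V E d \<longleftrightarrow> (\<forall>v\<in>V. real (card (nbhd V E v)) \<ge> d)"

definition robust_nbhd :: "'a set \<Rightarrow> 'a set set \<Rightarrow> real \<Rightarrow> 'a set \<Rightarrow> 'a set" where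
  "robust_nbhd V E \<nu> S =
     {v \<in> V. real (card (nbhd V E v \<inter> S)) \<ge> \<nu> * real (card V)}"

definition robust_expander :: "'a set \<Rightarrow> 'a set set \<Rightarrow> real \<Rightarrow> real \<Rightarrow> bool" where
  "robust_expander V E \<nu> \<tau> \<longleftrightarrow>
     (\<forall>S. S \<subseteq> V \<and> \<tau> * real (card V) \<le> real (card S)
          \<and> real (card S) \<le> (1 - \<tau>) * real (card V) \<longrightarrow>
        real (card (robust_nbhd V E \<nu> S)) \<ge> real (card S) + \<nu> * real (card V))"

definition perfect_matching :: "'a set \<Rightarrow> 'a set set \<Rightarrow> 'a set set \<Rightarrow> bool" where
  "perfect_matching V E M \<longleftrightarrow> M \<subseteq> E \<and> (\<forall>v\<in>V. \<exists>!e. e \<in> M \<and> v \<in> e)"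

text \<open>Shifted M-walk given as the vertex list [v_1, ..., v_{2l}] (l >= 1).
  With 0-based indices j: every consecutive pair is an edge, pairs starting at
  odd j are in M, pairs starting at even j are not in M.  Its length
  (number of edges) is length xs - 1.\<close>
definition shifted_M_walk :: "'a set set \<Rightarrow> 'a set set \<Rightarrow> 'a list \<Rightarrow> bool" where
  "shifted_M_walk E M xs \<longleftrightarrow> xs \<noteq> [] \<and> even (length xs) \<and>
     (\<forall>j. j + 1 < length xs \<longrightarrow> {xs ! j, xs ! (j + 1)} \<in> E) \<and>
     (\<forall>j. j + 1 < length xs \<and> odd j \<longrightarrow> {xs ! j, xs ! (j + 1)} \<in> M) \<and>
     (\<forall>j. j + 1 < length xs \<and> even j \<longrightarrow> {xs ! j, xs ! (j + 1)} \<notin> M)"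

end

theory Submission
  imports Defs
begin

text \<open>Let \<open>reach_ball a k\<close> be the set of vertices reached from \<open>a\<close> by shifted \<open>M\<close>-walks of at
  most \<open>k\<close> rounds, a round being a non-matching edge followed by a matching edge. As soon as
  \<open>mate a\<close> is reached there is a closed shifted \<open>M\<close>-walk at \<open>a\<close>, and this happens within \<open>k + j + 1\<close>
  rounds once a non-matching edge joins vertices reached in \<open>k\<close> and \<open>j\<close> rounds. The mates of the
  robust neighbourhood of a ball lie in the next ball. So if \<open>\<nu> n > 1\<close>, the balls grow by
  \<open>\<nu> n\<close> per round until, after about \<open>1 / (2\<nu>)\<close> rounds, they hold half of the vertices; such a
  ball meets its own robust neighbourhood, and a vertex with at least two neighbours in the ball
  gives the non-matching edge. If \<open>\<nu> n \<le> 1\<close>, the balls stabilise within \<open>n \<le> 1 / \<nu>\<close> rounds,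
  and a stable ball missing \<open>mate a\<close> would contain a set that does not expand.\<close>

lemma robust_nbhd_mono:
  assumes "finite V" "S \<subseteq> S'"
  shows "robust_nbhd V E \<nu> S \<subseteq> robust_nbhd V E \<nu> S'"
proof -
  have "card (nbhd V E v \<inter> S) \<le> card (nbhd V E v \<inter> S')" for v
    using assms by (intro card_mono) (auto simp: nbhd_def)
  then show ?thesis
    unfolding robust_nbhd_def using order_trans of_nat_mono by blast
qed

lemma robust_nbhd_subset: "robust_nbhd V E \<nu> S \<subseteq> V"
  by (auto simp: robust_nbhd_def)

lemma robust_nbhd_meets:
  assumes "v \<in> robust_nbhd V E \<nu> S" "0 < \<nu> * real (card V)"
  shows "nbhd V E v \<inter> S \<noteq> {}"
  using assms unfolding robust_nbhd_def by force

text \<open>If \<open>S\<close> is too large for the expansion property, apply it to a subset of \<open>S\<close> of size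
  \<open>\<lfloor>(1 - \<tau>) n\<rfloor>\<close>.\<close>

lemma robust_expander_large_set_meets_robust_nbhd:
  assumes "finite V" "robust_expander V E \<nu> \<tau>" "0 \<le> \<tau>" "S \<subseteq> V"
    and half: "real (card V) \<le> 2 * real (card S)"
    and window: "1 \<le> (1 - 2 * \<tau>) * real (card V)"
    and dense: "1 < \<nu> * real (card V)"
  shows "robust_nbhd V E \<nu> S \<inter> S \<noteq> {}"
proof
  assume disjoint: "robust_nbhd V E \<nu> S \<inter> S = {}"
  define n where "n = real (card V)"
  define f where "f = nat \<lfloor>n - \<tau> * n\<rfloor>"
  define s where "s = min (card S) f"
  have upper: "(1 - \<tau>) * n = n - \<tau> * n" and window': "2 * (\<tau> * n) + 1 \<le> n"
    using window unfolding n_def by (simp_all add: algebra_simps)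
  have "0 \<le> \<tau> * n"
    using assms(3) unfolding n_def by simp
  then have "0 \<le> n - \<tau> * n"
    using window' by linarith
  then have "real f = of_int \<lfloor>n - \<tau> * n\<rfloor>"
    unfolding f_def by simp
  then have floor_bounds: "n - \<tau> * n - 1 < real f" "real f \<le> n - \<tau> * n"
    using real_of_int_floor_gt_diff_one[of "n - \<tau> * n"] of_int_floor_le[of "n - \<tau> * n"]
    by linarith+
  have s_bounds: "\<tau> * n \<le> real s \<and> real s \<le> n - \<tau> * n \<and> n - 1 < real s + real (card S)"
  proof (cases "card S \<le> f")
    case True
    then show ?thesis
      using half window' floor_bounds of_nat_mono[OF True] unfolding s_def n_def by simp
  next
    case False
    then show ?thesis
      using window' floor_bounds of_nat_mono[of f "card S"] unfolding s_def by simp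
  qed
  obtain S' where S': "S' \<subseteq> S" "card S' = s"
    using obtain_subset_with_card_n[of s S] unfolding s_def by auto
  have "real s + \<nu> * n \<le> real (card (robust_nbhd V E \<nu> S'))"
    using assms(2,4) S' s_bounds upper unfolding robust_expander_def n_def by auto
  also have "\<dots> \<le> real (card (robust_nbhd V E \<nu> S))"
    using robust_nbhd_mono[OF assms(1) S'(1)] assms(1)
    by (intro of_nat_mono card_mono) (auto simp: robust_nbhd_def)
  finally have "n < real (card (robust_nbhd V E \<nu> S)) + real (card S)"
    using s_bounds dense unfolding n_def by linarith
  moreover have "robust_nbhd V E \<nu> S \<union> S \<subseteq> V"
    using assms(4) unfolding robust_nbhd_def by blast
  then have "card (robust_nbhd V E \<nu> S) + card S \<le> card V"
    using card_Un_disjoint[OF _ _ disjoint] card_mono[OF assms(1)] assms(1)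
    by (metis finite_subset le_supE)
  ultimately show False unfolding n_def by linarith
qed

lemma obtain_subset_between_in_window:
  fixes n \<tau> :: real
  assumes "finite R" "T \<subseteq> R" "0 \<le> \<tau>" "1 \<le> (1 - 2 * \<tau>) * n"
    and "real (card T) \<le> n - real (card R)" "\<tau> * n \<le> real (card R)"
  obtains S where "T \<subseteq> S" "S \<subseteq> R" "\<tau> * n \<le> real (card S)" "real (card S) \<le> (1 - \<tau>) * n"
proof -
  define s where "s = max (card T) (nat \<lceil>\<tau> * n\<rceil>)"
  have bounds: "2 * (\<tau> * n) + 1 \<le> n" "(1 - \<tau>) * n = n - \<tau> * n"
    using assms(4) by (simp_all add: algebra_simps)
  have "0 \<le> n"
    using assms(5) of_nat_0_le_iff[of "card T"] of_nat_0_le_iff[of "card R"] by linarith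
  then have "0 \<le> \<tau> * n"
    using assms(3) by simp
  then have ceiling: "real (nat \<lceil>\<tau> * n\<rceil>) \<le> \<tau> * n + 1" "\<tau> * n \<le> real (nat \<lceil>\<tau> * n\<rceil>)"
    using of_int_ceiling_le_add_one[of "\<tau> * n"] real_nat_ceiling_ge[of "\<tau> * n"] by simp_all
  have "real (nat \<lceil>\<tau> * n\<rceil>) \<le> real s"
    unfolding s_def by (intro of_nat_mono) simp
  then have s_lower: "\<tau> * n \<le> real s"
    using ceiling by linarith
  have "real s = real (card T) \<or> real s = real (nat \<lceil>\<tau> * n\<rceil>)"
    unfolding s_def by (simp add: max_def)
  then have s_upper: "real s \<le> (1 - \<tau>) * n"
    using assms(5,6) bounds ceiling by (elim disjE) linarith+
  have "card T \<le> s" "s \<le> card R"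
    using card_mono[OF assms(1,2)] assms(6) unfolding s_def by auto
  then obtain S where "T \<subseteq> S" "S \<subseteq> R" "card S = s"
    using exists_subset_between[OF _ _ assms(2,1)] by blast
  then show thesis using that s_lower s_upper by simp
qed

locale matched_graph =
  fixes V :: "'a set" and E :: "'a set set" and M :: "'a set set"
  assumes simple: "simple_graph V E" and perfect: "perfect_matching V E M"
begin

lemma finite_V: "finite V"
  using simple by (simp add: simple_graph_def)

lemma M_subset_E: "M \<subseteq> E"
  using perfect by (simp add: perfect_matching_def)

lemma edge_endpoints:
  assumes "{x, y} \<in> E" shows "x \<in> V" "y \<in> V" "x \<noteq> y"
proof -
  obtain u v where "u \<in> V" "v \<in> V" "u \<noteq> v" "{x, y} = {u, v}"
    using simple assms unfolding simple_graph_def by blast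
  then show "x \<in> V" "y \<in> V" "x \<noteq> y" by (auto simp: doubleton_eq_iff)
qed

definition mate :: "'a \<Rightarrow> 'a" where
  "mate v = (SOME u. {v, u} \<in> M)"

lemma mate_in_M:
  assumes "v \<in> V" shows "{v, mate v} \<in> M"
proof -
  obtain e where "e \<in> M" "v \<in> e"
    using perfect assms unfolding perfect_matching_def by blast
  moreover obtain p q where "e = {p, q}"
    using simple \<open>e \<in> M\<close> M_subset_E unfolding simple_graph_def by blast
  ultimately have "\<exists>u. {v, u} \<in> M" by (auto simp: insert_commute)
  then show ?thesis unfolding mate_def by (rule someI_ex)
qed

lemma mate_unique:
  assumes "v \<in> V" "{v, u} \<in> M" shows "u = mate v"
proof -
  have "\<exists>!e. e \<in> M \<and> v \<in> e"
    using perfect assms(1) unfolding perfect_matching_def by simp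
  then have "{v, u} = {v, mate v}"
    using assms mate_in_M by blast
  moreover have "u \<noteq> v"
    using edge_endpoints(3) assms(2) M_subset_E by blast
  ultimately show ?thesis by (auto simp: doubleton_eq_iff)
qed

lemma mate_in_E: "v \<in> V \<Longrightarrow> {v, mate v} \<in> E"
  using mate_in_M M_subset_E by blast

lemma mate_in_V: "v \<in> V \<Longrightarrow> mate v \<in> V"
  by (rule edge_endpoints(2)[OF mate_in_E])

lemma mate_neq: "v \<in> V \<Longrightarrow> mate v \<noteq> v"
  using edge_endpoints(3)[OF mate_in_E, of v] by simp

lemma mate_mate:
  assumes "v \<in> V" shows "mate (mate v) = v"
proof -
  have "{mate v, v} \<in> M" using mate_in_M[OF assms] by (simp add: insert_commute)
  then show ?thesis using mate_unique[OF mate_in_V[OF assms]] by simp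
qed

lemma inj_on_mate: "inj_on mate V"
  by (rule inj_on_inverseI[of _ mate]) (rule mate_mate)

lemma card_V_ge_2: "v \<in> V \<Longrightarrow> 2 \<le> card V"
proof -
  assume "v \<in> V"
  then have "card {v, mate v} = 2" "{v, mate v} \<subseteq> V"
    using mate_in_V mate_neq[of v] by auto
  then show ?thesis using card_mono[OF finite_V, of "{v, mate v}"] by simp
qed

lemma non_matching_neighbour:
  assumes "y \<in> V" "2 \<le> card (nbhd V E y \<inter> S)"
  obtains x where "x \<in> S" "{x, y} \<in> E" "{x, y} \<notin> M"
proof -
  have "\<not> nbhd V E y \<inter> S \<subseteq> {mate y}"
    using assms(2) card_mono[of "{mate y}" "nbhd V E y \<inter> S"] by auto
  then obtain x where "x \<in> S" "{x, y} \<in> E" "x \<noteq> mate y"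
    unfolding nbhd_def by blast
  moreover have "{x, y} \<notin> M"
    using mate_unique[OF assms(1), of x] \<open>x \<noteq> mate y\<close> by (auto simp: insert_commute)
  ultimately show thesis using that by blast
qed

text \<open>\<open>alt_reach x k z\<close>: \<open>z\<close> is reached from \<open>x\<close> by \<open>k\<close> rounds, each a non-matching edge
  \<open>{x, y}\<close> followed by the matching edge \<open>{y, mate y}\<close>; this is the vertex sequence
  \<open>v\<^sub>1, v\<^sub>3, v\<^sub>5, \<dots>\<close> of a shifted \<open>M\<close>-walk.\<close>

inductive alt_reach :: "'a \<Rightarrow> nat \<Rightarrow> 'a \<Rightarrow> bool" where
  refl: "alt_reach x 0 x"
| step: "{x, y} \<in> E \<Longrightarrow> {x, y} \<notin> M \<Longrightarrow> alt_reach (mate y) k z \<Longrightarrow> alt_reach x (Suc k) z"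

lemma alt_reach_in_V: "alt_reach x k z \<Longrightarrow> x \<in> V \<Longrightarrow> z \<in> V"
  by (induction rule: alt_reach.induct) (auto intro: mate_in_V dest: edge_endpoints(2))

lemma alt_reach_trans: "alt_reach x k y \<Longrightarrow> alt_reach y j z \<Longrightarrow> alt_reach x (k + j) z"
  by (induction rule: alt_reach.induct) (auto intro: alt_reach.intros)

lemma alt_reach_snoc:
  "alt_reach x k s \<Longrightarrow> {s, y} \<in> E \<Longrightarrow> {s, y} \<notin> M \<Longrightarrow> alt_reach x (Suc k) (mate y)"
  using alt_reach_trans[of x k s 1 "mate y"] by (simp add: alt_reach.intros)

lemma alt_reach_0_iff: "alt_reach x 0 z \<longleftrightarrow> z = x"
  by (auto elim: alt_reach.cases intro: alt_reach.refl)

lemma alt_reach_SucE: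
  assumes "alt_reach x (Suc k) z"
  obtains s y where "alt_reach x k s" "{s, y} \<in> E" "{s, y} \<notin> M" "z = mate y"
  using assms
proof (induction k arbitrary: x)
  case 0
  then show ?case by (auto elim: alt_reach.cases simp: alt_reach_0_iff intro: alt_reach.refl)
next
  case (Suc k)
  from Suc.prems(2) obtain y where y: "{x, y} \<in> E" "{x, y} \<notin> M" "alt_reach (mate y) (Suc k) z"
    by (cases rule: alt_reach.cases) auto
  show ?case
    by (rule Suc.IH[OF _ y(3)]) (use Suc.prems(1) y alt_reach.step in blast)
qed

text \<open>Traversing the rounds backwards and swapping the roles of each vertex and its mate.\<close>

lemma alt_reach_reverse: "alt_reach x k z \<Longrightarrow> x \<in> V \<Longrightarrow> alt_reach (mate z) k (mate x)"
proof (induction rule: alt_reach.induct)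
  case (refl x)
  show ?case by (rule alt_reach.refl)
next
  case (step x y k z)
  have "y \<in> V" "x \<in> V" using edge_endpoints[OF step.hyps(1)] by auto
  then have "alt_reach (mate z) k y" using step.IH mate_in_V mate_mate by metis
  moreover have "{y, x} \<in> E" "{y, x} \<notin> M" using step.hyps by (auto simp: insert_commute)
  ultimately show ?case by (rule alt_reach_snoc)
qed

lemma shifted_M_walk_Cons2:
  assumes walk: "shifted_M_walk E M xs" and "{x, y} \<in> E" "{x, y} \<notin> M" "{y, hd xs} \<in> M"
  shows "shifted_M_walk E M (x # y # xs)"
proof -
  have "xs ! 0 = hd xs"
    using walk by (simp add: shifted_M_walk_def hd_conv_nth)
  then show ?thesis
    using assms M_subset_E unfolding shifted_M_walk_def
    by (auto simp: nth_Cons split: nat.split)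
qed

lemma alt_reach_walk:
  assumes "alt_reach x k s" "{s, w} \<in> E" "{s, w} \<notin> M" "x \<in> V"
  shows "\<exists>xs. shifted_M_walk E M xs \<and> hd xs = x \<and> last xs = w \<and> length xs = 2 * (k + 1)"
  using assms
proof (induction rule: alt_reach.induct)
  case (refl x)
  have "shifted_M_walk E M [x, w]"
    using refl unfolding shifted_M_walk_def by (auto simp: less_Suc_eq intro: odd_pos)
  then show ?case by fastforce
next
  case (step x y k z)
  have "y \<in> V" using edge_endpoints(2)[OF step.hyps(1)] .
  then obtain xs where xs: "shifted_M_walk E M xs" "hd xs = mate y" "last xs = w"
      "length xs = 2 * (k + 1)"
    using step mate_in_V by blast
  then have "shifted_M_walk E M (x # y # xs)"
    using shifted_M_walk_Cons2 step.hyps mate_in_M \<open>y \<in> V\<close> by auto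
  then show ?case using xs by (intro exI[of _ "x # y # xs"]) auto
qed

text \<open>The last round can reach \<open>mate a\<close> only through a non-matching edge ending at \<open>a\<close>.\<close>

lemma alt_reach_mate_closed_walk:
  assumes "alt_reach a k (mate a)" "a \<in> V"
  shows "\<exists>xs. shifted_M_walk E M xs \<and> hd xs = a \<and> last xs = a \<and> length xs = 2 * k"
proof -
  have "k \<noteq> 0"
  proof
    assume "k = 0"
    then show False using assms(1) mate_neq[OF assms(2)] by (simp add: alt_reach_0_iff)
  qed
  then obtain k' where k: "k = Suc k'" using not0_implies_Suc by blast
  obtain s y where sy: "alt_reach a k' s" "{s, y} \<in> E" "{s, y} \<notin> M" "mate a = mate y"
    using assms(1) unfolding k by (rule alt_reach_SucE) simp
  have "y = mate (mate y)" using mate_mate[OF edge_endpoints(2)[OF sy(2)]] by simp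
  also have "\<dots> = a" using sy(4) mate_mate[OF assms(2)] by simp
  finally show ?thesis using alt_reach_walk[OF sy(1-3) assms(2)] k by simp
qed

definition reach_ball :: "'a \<Rightarrow> nat \<Rightarrow> 'a set" where
  "reach_ball a k = {z. \<exists>j\<le>k. alt_reach a j z}"

lemma reach_ball_subset_V: "a \<in> V \<Longrightarrow> reach_ball a k \<subseteq> V"
  unfolding reach_ball_def using alt_reach_in_V by blast

lemma finite_reach_ball: "a \<in> V \<Longrightarrow> finite (reach_ball a k)"
  using reach_ball_subset_V finite_V finite_subset by blast

lemma reach_ball_mono: "i \<le> j \<Longrightarrow> reach_ball a i \<subseteq> reach_ball a j"
  unfolding reach_ball_def using le_trans by blast

lemma center_in_reach_ball: "a \<in> reach_ball a k"
  unfolding reach_ball_def using alt_reach.refl by blast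

lemma mate_neighbour_in_reach_ball:
  assumes "x \<in> reach_ball a k" "{x, v} \<in> E"
  shows "mate v \<in> reach_ball a (Suc k)"
proof (cases "{x, v} \<in> M")
  case True
  have "v = mate x" using mate_unique[OF edge_endpoints(1)[OF assms(2)] True] .
  then have "mate v = x" using mate_mate[OF edge_endpoints(1)[OF assms(2)]] by simp
  then show ?thesis using assms(1) reach_ball_mono[of k "Suc k"] by auto
next
  case False
  obtain j where "j \<le> k" "alt_reach a j x"
    using assms(1) unfolding reach_ball_def by blast
  then show ?thesis
    using alt_reach_snoc[OF _ assms(2) False] unfolding reach_ball_def by fastforce
qed

lemma card_le_card_reach_ball_Suc:
  assumes "a \<in> V" "A \<subseteq> V" "\<And>v. v \<in> A \<Longrightarrow> nbhd V E v \<inter> reach_ball a k \<noteq> {}"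
  shows "card A \<le> card (reach_ball a (Suc k))"
proof -
  have "mate v \<in> reach_ball a (Suc k)" if v: "v \<in> A" for v
  proof -
    obtain x where "x \<in> reach_ball a k" "{x, v} \<in> E"
      using assms(3)[OF v] unfolding nbhd_def by blast
    then show ?thesis by (rule mate_neighbour_in_reach_ball)
  qed
  then have "mate ` A \<subseteq> reach_ball a (Suc k)" by blast
  then have "card (mate ` A) \<le> card (reach_ball a (Suc k))"
    using card_mono finite_reach_ball[OF assms(1)] by blast
  moreover have "card (mate ` A) = card A"
    using card_image inj_on_subset[OF inj_on_mate assms(2)] by blast
  ultimately show ?thesis by simp
qed

lemma closed_walk_if_mate_in_reach_ball:
  assumes "a \<in> V" "mate a \<in> reach_ball a k"
  shows "\<exists>xs. shifted_M_walk E M xs \<and> hd xs = a \<and> last xs = a \<and> length xs \<le> 2 * k"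
proof -
  obtain j where "j \<le> k" "alt_reach a j (mate a)"
    using assms(2) unfolding reach_ball_def by blast
  then show ?thesis
    using alt_reach_mate_closed_walk[OF _ assms(1), of j] by auto
qed

text \<open>A non-matching edge between two vertices reachable from \<open>a\<close> closes up a walk: go out to one
  end, cross the edge, and return along the reversed walk to the other end.\<close>

lemma mate_in_reach_ball_if_edge:
  assumes "a \<in> V" "x \<in> reach_ball a k" "z \<in> reach_ball a j" "{x, z} \<in> E" "{x, z} \<notin> M"
  shows "mate a \<in> reach_ball a (Suc (k + j))"
proof -
  obtain k1 where k1: "k1 \<le> k" "alt_reach a k1 x"
    using assms(2) unfolding reach_ball_def by blast
  obtain j1 where j1: "j1 \<le> j" "alt_reach a j1 z"
    using assms(3) unfolding reach_ball_def by blast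
  have "alt_reach a (Suc k1 + j1) (mate a)"
    using alt_reach_trans[OF alt_reach_snoc[OF k1(2) assms(4,5)]
        alt_reach_reverse[OF j1(2) assms(1)]] .
  then show ?thesis
    using k1(1) j1(1) unfolding reach_ball_def by (auto intro!: exI[of _ "Suc (k1 + j1)"])
qed

lemma reach_ball_stable:
  assumes "reach_ball a (Suc k) = reach_ball a k"
  shows "reach_ball a i \<subseteq> reach_ball a k"
proof -
  have "z \<in> reach_ball a k" if "alt_reach a j z" for j z
    using that
  proof (induction j arbitrary: z)
    case 0
    then show ?case by (simp add: alt_reach_0_iff center_in_reach_ball)
  next
    case (Suc j)
    then obtain s y where "alt_reach a j s" "{s, y} \<in> E" "z = mate y"
      by (elim alt_reach_SucE)
    then have "z \<in> reach_ball a (Suc k)"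
      using Suc.IH mate_neighbour_in_reach_ball by blast
    then show ?case unfolding assms .
  qed
  then show ?thesis unfolding reach_ball_def by blast
qed

lemma reach_ball_stabilises:
  assumes "a \<in> V"
  obtains k where "k < card V" "reach_ball a (Suc k) = reach_ball a k"
proof -
  have "\<exists>k < card V. reach_ball a (Suc k) = reach_ball a k"
  proof (rule ccontr)
    assume "\<not> ?thesis"
    then have grows: "reach_ball a i \<subset> reach_ball a (Suc i)" if "i < card V" for i
      using that reach_ball_mono[of i "Suc i" a] by auto
    have "Suc i \<le> card (reach_ball a i)" if "i \<le> card V" for i
      using that
    proof (induction i)
      case 0
      have "reach_ball a 0 \<noteq> {}" using center_in_reach_ball by blast
      then show ?case using finite_reach_ball[OF assms] by (simp add: Suc_le_eq card_gt_0_iff)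
    next
      case (Suc i)
      then have "card (reach_ball a i) < card (reach_ball a (Suc i))"
        using psubset_card_mono[OF finite_reach_ball[OF assms] grows] by simp
      then show ?case using Suc by simp
    qed
    then have "Suc (card V) \<le> card (reach_ball a (card V))" by blast
    moreover have "card (reach_ball a (card V)) \<le> card V"
      using card_mono[OF finite_V reach_ball_subset_V[OF assms]] .
    ultimately show False by simp
  qed
  then show thesis using that by blast
qed

lemma min_degree_le_card_reach_ball_1:
  assumes "a \<in> V" "min_degree_ge V E d"
  shows "d \<le> real (card (reach_ball a 1))"
proof -
  have "card (nbhd V E a) \<le> card (reach_ball a (Suc 0))"
  proof (rule card_le_card_reach_ball_Suc[OF assms(1)])
    show "nbhd V E a \<subseteq> V" by (simp add: nbhd_def)
    fix v assume "v \<in> nbhd V E a"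
    then have "a \<in> nbhd V E v \<inter> reach_ball a 0"
      using assms(1) center_in_reach_ball by (auto simp: nbhd_def insert_commute)
    then show "nbhd V E v \<inter> reach_ball a 0 \<noteq> {}" by blast
  qed
  then show ?thesis using assms unfolding min_degree_ge_def by force
qed

text \<open>Below the expansion threshold each round adds \<open>\<nu> n\<close> new vertices, because the mates of the
  robust neighbourhood of \<open>reach_ball a k\<close> lie in \<open>reach_ball a (Suc k)\<close>.\<close>

lemma reach_ball_growth:
  assumes a: "a \<in> V" and expander: "robust_expander V E \<nu> \<tau>" "0 < \<nu>"
    and degree: "min_degree_ge V E (\<eta> * real (card V))" "\<tau> \<le> \<eta>"
  shows "(1 - \<tau>) * real (card V) < real (card (reach_ball a (Suc k)))
    \<or> \<eta> * real (card V) + real k * \<nu> * real (card V) \<le> real (card (reach_ball a (Suc k)))"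
proof (induction k)
  case 0
  then show ?case using min_degree_le_card_reach_ball_1[OF a degree(1)] by simp
next
  case (Suc k)
  define n where "n = real (card V)"
  define c where "c = real (card (reach_ball a (Suc k)))"
  define c' where "c' = real (card (reach_ball a (Suc (Suc k))))"
  have "0 < n" using a finite_V card_gt_0_iff unfolding n_def by auto
  have "c \<le> c'"
    using card_mono[OF finite_reach_ball[OF a] reach_ball_mono] unfolding c_def c'_def by simp
  show ?case
  proof (cases "(1 - \<tau>) * n < c")
    case True
    then show ?thesis using \<open>c \<le> c'\<close> unfolding n_def c_def c'_def by linarith
  next
    case False
    then have grown: "\<eta> * n + real k * \<nu> * n \<le> c"
      using Suc.IH unfolding n_def c_def by linarith
    moreover have "\<tau> * n \<le> \<eta> * n" "0 \<le> real k * \<nu> * n"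
      using \<open>0 < n\<close> degree(2) expander(2) by (simp_all add: mult_right_mono)
    ultimately have "c + \<nu> * n \<le> real (card (robust_nbhd V E \<nu> (reach_ball a (Suc k))))"
      using False expander(1) reach_ball_subset_V[OF a]
      unfolding robust_expander_def n_def c_def by auto
    also have "\<dots> \<le> c'"
    proof -
      have "0 < \<nu> * real (card V)"
        using expander(2) \<open>0 < n\<close> unfolding n_def by simp
      then show ?thesis unfolding c'_def
        by (intro of_nat_mono card_le_card_reach_ball_Suc[OF a robust_nbhd_subset]
            robust_nbhd_meets)
    qed
    finally have "\<eta> * n + real (Suc k) * \<nu> * n \<le> c'"
      using grown by (simp add: algebra_simps)
    then show ?thesis unfolding n_def c'_def by blast
  qed
qed

text \<open>Once \<open>reach_ball a k\<close> has at least \<open>n / 2\<close> vertices, some vertex of it has a non-matching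
  neighbour in it, and \<open>mate_in_reach_ball_if_edge\<close> applies.\<close>

lemma mate_in_reach_ball_dense:
  assumes a: "a \<in> V" and expander: "robust_expander V E \<nu> \<tau>" "0 \<le> \<tau>"
    and degree: "min_degree_ge V E (\<eta> * real (card V))" "\<tau> \<le> \<eta>"
    and window: "1 \<le> (1 - 2 * \<tau>) * real (card V)"
    and dense: "1 < \<nu> * real (card V)"
  shows "mate a \<in> reach_ball a (2 * nat \<lceil>1 / (2 * \<nu>)\<rceil> + 3)"
proof -
  define n where "n = real (card V)"
  define K where "K = nat \<lceil>1 / (2 * \<nu>)\<rceil>"
  have K_def': "2 * nat \<lceil>1 / (2 * \<nu>)\<rceil> + 3 = Suc (Suc K + Suc K)"
    unfolding K_def by simp
  define S where "S = reach_ball a (Suc K)"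
  have "0 < \<nu> * n" "0 \<le> n"
    using dense unfolding n_def by simp_all
  then have "0 < n" "0 < \<nu>"
    by (auto simp: zero_less_mult_iff)
  have "1 / (2 * \<nu>) * (\<nu> * n) \<le> real K * (\<nu> * n)"
    using \<open>0 < \<nu> * n\<close> unfolding K_def by (intro mult_right_mono real_nat_ceiling_ge) simp
  then have K_large: "n \<le> 2 * (real K * \<nu> * n)"
    using \<open>0 < \<nu>\<close> by (simp add: mult.assoc)
  have "0 \<le> \<eta> * n" "(1 - \<tau>) * n = n - \<tau> * n" "2 * (\<tau> * n) + 1 \<le> n"
    using \<open>0 < n\<close> expander(2) degree(2) window unfolding n_def by (simp_all add: algebra_simps)
  then have "n \<le> 2 * real (card S)"
    using reach_ball_growth[OF a expander(1) \<open>0 < \<nu>\<close> degree, of K] K_large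
    unfolding S_def n_def[symmetric] by linarith
  then obtain y where y: "y \<in> robust_nbhd V E \<nu> S" "y \<in> S"
    using robust_expander_large_set_meets_robust_nbhd[OF finite_V expander
        reach_ball_subset_V[OF a] _ window dense]
    unfolding n_def S_def by blast
  then have "2 \<le> card (nbhd V E y \<inter> S)"
    using dense unfolding robust_nbhd_def by auto
  then obtain x where "x \<in> S" "{x, y} \<in> E" "{x, y} \<notin> M"
    using non_matching_neighbour y unfolding robust_nbhd_def by blast
  then have "mate a \<in> reach_ball a (Suc (Suc K + Suc K))"
    using mate_in_reach_ball_if_edge[OF a] y(2) unfolding S_def by blast
  then show ?thesis unfolding K_def' .
qed

text \<open>A stable ball \<open>R\<close> missing \<open>mate a\<close> spans no non-matching edge (by
  \<open>mate_in_reach_ball_if_edge\<close>), and matching edges leave \<open>R\<close> only from the vertices in the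
  lower bound for \<open>S\<close>; so every neighbour of \<open>S\<close> is the mate of a vertex of \<open>S\<close>.\<close>

lemma robust_nbhd_subset_mate_image:
  assumes a: "a \<in> V" "0 < \<nu> * real (card V)"
    and stable: "reach_ball a (Suc k) = reach_ball a k"
    and outside: "mate a \<notin> reach_ball a k"
    and S: "{x \<in> reach_ball a k. mate x \<notin> reach_ball a k} \<subseteq> S" "S \<subseteq> reach_ball a k"
  shows "robust_nbhd V E \<nu> S \<subseteq> mate ` S"
proof
  fix v assume v: "v \<in> robust_nbhd V E \<nu> S"
  have "nbhd V E v \<inter> S \<noteq> {}"
    using robust_nbhd_meets[OF v a(2)] .
  then obtain x where x: "x \<in> S" "{x, v} \<in> E"
    unfolding nbhd_def by blast
  have "x \<in> V" "v \<in> V" using edge_endpoints[OF x(2)] by auto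
  show "v \<in> mate ` S"
  proof (cases "{x, v} \<in> M")
    case True
    then show ?thesis using mate_unique[OF \<open>x \<in> V\<close>] x(1) by blast
  next
    case False
    have "v \<notin> reach_ball a k"
    proof
      assume "v \<in> reach_ball a k"
      then have "mate a \<in> reach_ball a (Suc (k + k))"
        using mate_in_reach_ball_if_edge[OF a(1) _ _ x(2) False] x(1) S(2) by blast
      then show False using subsetD[OF reach_ball_stable[OF stable]] outside by blast
    qed
    moreover have "mate v \<in> reach_ball a k"
      using mate_neighbour_in_reach_ball[of x a k v] x S(2) stable by auto
    ultimately have "mate v \<in> S"
      using S(1) mate_mate[OF \<open>v \<in> V\<close>] by auto
    then show ?thesis using mate_mate[OF \<open>v \<in> V\<close>] by (metis image_eqI)
  qed
qed

text \<open>If the balls stop growing before reaching \<open>mate a\<close>, some \<open>S\<close> as in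
  \<open>robust_nbhd_subset_mate_image\<close> has a size to which the expansion property applies.\<close>

lemma mate_in_stable_reach_ball:
  assumes a: "a \<in> V" and expander: "robust_expander V E \<nu> \<tau>" "0 < \<nu>" "0 \<le> \<tau>"
    and stable: "reach_ball a (Suc k) = reach_ball a k"
    and large: "\<tau> * real (card V) \<le> real (card (reach_ball a k))"
    and window: "1 \<le> (1 - 2 * \<tau>) * real (card V)"
  shows "mate a \<in> reach_ball a k"
proof (rule ccontr)
  assume outside: "mate a \<notin> reach_ball a k"
  define R where "R = reach_ball a k"
  define T where "T = {x \<in> R. mate x \<notin> R}"
  define n where "n = real (card V)"
  have R: "R \<subseteq> V" "finite R"
    using reach_ball_subset_V[OF a] finite_reach_ball[OF a] unfolding R_def by auto
  have "0 < card V"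
    using a finite_V card_gt_0_iff by blast
  then have "0 < \<nu> * n"
    using expander(2) unfolding n_def by simp
  have "card (mate ` T) \<le> card (V - R)"
    using mate_in_V finite_V R(1) unfolding T_def by (intro card_mono) auto
  moreover have "card (mate ` T) = card T"
    using R(1) unfolding T_def by (intro card_image inj_on_subset[OF inj_on_mate]) auto
  ultimately have T_small: "real (card T) \<le> n - real (card R)"
    using card_Diff_subset[OF R(2,1)] card_mono[OF finite_V R(1)] unfolding n_def by simp
  obtain S where S: "T \<subseteq> S" "S \<subseteq> R"
      and S_window: "\<tau> * n \<le> real (card S)" "real (card S) \<le> (1 - \<tau>) * n"
    using obtain_subset_between_in_window[OF R(2) _ expander(3) window[folded n_def] T_small]
      large unfolding T_def R_def n_def by blast
  have "real (card S) + \<nu> * n \<le> real (card (robust_nbhd V E \<nu> S))"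
    using expander(1) S R(1) S_window unfolding robust_expander_def n_def by auto
  also have "\<dots> \<le> real (card (mate ` S))"
    using robust_nbhd_subset_mate_image[OF a _ stable outside, of \<nu> S] S \<open>0 < \<nu> * n\<close>
      finite_subset[OF S(2) R(2)] unfolding T_def R_def n_def by (simp add: card_mono)
  also have "\<dots> \<le> real (card S)"
    using card_image_le finite_subset[OF S(2) R(2)] by (metis of_nat_mono)
  finally show False using \<open>0 < \<nu> * n\<close> by simp
qed

lemma mate_in_short_reach_ball:
  assumes a: "a \<in> V" and expander: "robust_expander V E \<nu> \<tau>"
    and degree: "min_degree_ge V E (\<eta> * real (card V))"
    and params: "0 < \<nu>" "\<nu> \<le> \<tau>" "\<tau> < \<eta>" "\<eta> < 1 / 10"
  obtains k where "real k \<le> 3 / (2 * \<nu>)" "mate a \<in> reach_ball a k"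
proof -
  define n where "n = real (card V)"
  have "2 \<le> n" using card_V_ge_2[OF a] unfolding n_def by simp
  have "4 / 5 * n \<le> (1 - 2 * \<tau>) * n"
    using params \<open>2 \<le> n\<close> by (intro mult_right_mono) auto
  then have window: "1 \<le> (1 - 2 * \<tau>) * real (card V)"
    using \<open>2 \<le> n\<close> unfolding n_def by linarith
  have "10 \<le> 1 / \<nu>" using params by (simp add: field_simps)
  show thesis
  proof (cases "1 < \<nu> * n")
    case True
    have "real (nat \<lceil>1 / (2 * \<nu>)\<rceil>) \<le> 1 / (2 * \<nu>) + 1"
      using params(1) of_int_ceiling_le_add_one[of "1 / (2 * \<nu>)"] by simp
    then have "real (2 * nat \<lceil>1 / (2 * \<nu>)\<rceil> + 3) \<le> 3 / (2 * \<nu>)"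
      using \<open>10 \<le> 1 / \<nu>\<close> by (simp add: field_simps)
    moreover have "mate a \<in> reach_ball a (2 * nat \<lceil>1 / (2 * \<nu>)\<rceil> + 3)"
      using mate_in_reach_ball_dense[OF a expander _ degree _ window] True params
      unfolding n_def by simp
    ultimately show thesis by (rule that)
  next
    case False
    obtain k where k: "k < card V" "reach_ball a (Suc k) = reach_ball a k"
      using reach_ball_stabilises[OF a] by blast
    have "\<tau> * n \<le> \<eta> * n"
      using params \<open>2 \<le> n\<close> by (intro mult_right_mono) auto
    also have "\<dots> \<le> real (card (reach_ball a 1))"
      using min_degree_le_card_reach_ball_1[OF a degree] unfolding n_def .
    also have "\<dots> \<le> real (card (reach_ball a k))"
      using card_mono[OF finite_reach_ball[OF a] reach_ball_stable[OF k(2)]] by simp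
    finally have "mate a \<in> reach_ball a k"
      using mate_in_stable_reach_ball[OF a expander _ _ k(2) _ window] params
      unfolding n_def by simp
    moreover have "\<nu> * real k \<le> \<nu> * n"
      using k(1) params(1) unfolding n_def by simp
    then have "\<nu> * real k \<le> 1"
      using False by linarith
    then have "real k \<le> 3 / (2 * \<nu>)"
      using params(1) by (simp add: field_simps)
    ultimately show thesis using that by blast
  qed
qed

end

theorem lemma5p3:
  "\<exists>c::real. c > 0 \<and>
     (\<forall>(\<nu>::real) (\<tau>::real) (\<eta>::real). 0 < \<nu> \<and> \<nu> \<le> \<tau> \<and> \<tau> < \<eta> \<and> \<eta> < c \<longrightarrow>
       (\<forall>(V::nat set) E M. simple_graph V E
          \<and> min_degree_ge V E (\<eta> * real (card V))
          \<and> robust_expander V E \<nu> \<tau>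
          \<and> perfect_matching V E M \<longrightarrow>
          (\<forall>a\<in>V. \<exists>xs. shifted_M_walk E M xs \<and> hd xs = a \<and> last xs = a
                     \<and> real (length xs - 1) \<le> 3 / \<nu>)))"
proof (intro exI[of _ "1 / 10"] conjI allI impI ballI)
  fix \<nu> \<tau> \<eta> :: real and V :: "nat set" and E M a
  assume params: "0 < \<nu> \<and> \<nu> \<le> \<tau> \<and> \<tau> < \<eta> \<and> \<eta> < 1 / 10"
    and G: "simple_graph V E \<and> min_degree_ge V E (\<eta> * real (card V))
      \<and> robust_expander V E \<nu> \<tau> \<and> perfect_matching V E M"
    and a: "a \<in> V"
  interpret matched_graph V E M
    using G by unfold_locales auto
  obtain k where k: "real k \<le> 3 / (2 * \<nu>)" "mate a \<in> reach_ball a k"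
    using mate_in_short_reach_ball[OF a] G params by blast
  then obtain xs where xs: "shifted_M_walk E M xs" "hd xs = a" "last xs = a" "length xs \<le> 2 * k"
    using closed_walk_if_mate_in_reach_ball[OF a] by blast
  have "real (length xs - 1) \<le> 2 * real k"
    using xs(4) by linarith
  also have "\<dots> \<le> 3 / \<nu>"
    using k(1) by (simp add: field_simps)
  finally show "\<exists>xs. shifted_M_walk E M xs \<and> hd xs = a \<and> last xs = a
      \<and> real (length xs - 1) \<le> 3 / \<nu>"
    using xs by blast
qed (simp)

end
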